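(* Let $d=2k$ and let $Q=(Q_{ij})_{i,j=1}^k$ be the $d\times d$ block-diagonal matrix with $2\times2$ blocks, $Q_{ij}=0$ for $i\ne j$ and $Q_{ii}=\begin{pmatrix}1&\rho_i\\ \rho_i&1\end{pmatrix}$, where $0\le\rho_i<1$ for $i=1,\dots,k$. Consider the coordinate-wise pseudo-spectral gap $\mathrm{PG}(p)=\lambda_{\min}(D_pQ)$ for probability vectors $p\in\mathbb{R}^d$ with positive entries, where $D_p=\mathrm{diag}(p_1/Q_{11},\dots,p_d/Q_{dd})$ (here $Q_{jj}$ denotes the $j$-th diagonal entry of $Q$), and let $p^{\mathrm{opt}}$ be its maximiser over such $p$. Define $$\alpha_i=\frac{\prod_{l=1,l\ne i}^k(1-\rho_l)}{\sum_{l=1}^k\prod_{j=1,j\ne l}^k(1-\rho_j)}.$$ Then $p^{\mathrm{opt}}_{2i-1}=p^{\mathrm{opt}}_{2i}=\alpha_i/2$ for $i=1,\dots,k$, and $$\mathrm{PG}(p^{\mathrm{opt}})=\frac{\prod_{l=1}^k(1-\rho_l)}{2\sum_{l=1}^k\prod_{j=1,j\ne l}^k(1-\rho_j)}.$$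
   Context: $Q$ is the precision (inverse covariance) matrix of a target distribution on $\mathbb{R}^d$, and the Gibbs sampler is coordinate-wise ($s=d$ blocks of size one). $\lambda_{\min}$ denotes the smallest eigenvalue. *)

theory Defs
  imports Complex_Main
begin

text \<open>Square d x d real matrices are represented as functions nat => nat => real,
  with indices ranging over {1..d} (1-based, as in the paper).\<close>

definition mat_eigenvalue :: "nat \<Rightarrow> (nat \<Rightarrow> nat \<Rightarrow> real) \<Rightarrow> real \<Rightarrow> bool" where
  "mat_eigenvalue d M \<mu> \<longleftrightarrow>
     (\<exists>v :: nat \<Rightarrow> real. (\<exists>j\<in>{1..d}. v j \<noteq> 0) \<and>
        (\<forall>i\<in>{1..d}. (\<Sum>j=1..d. M i j * v j) = \<mu> * v i))"

definition lambda_min :: "nat \<Rightarrow> (nat \<Rightarrow> nat \<Rightarrow> real) \<Rightarrow> real" where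
  "lambda_min d M = Min {\<mu>. mat_eigenvalue d M \<mu>}"

definition DpQ :: "(nat \<Rightarrow> nat \<Rightarrow> real) \<Rightarrow> (nat \<Rightarrow> real) \<Rightarrow> nat \<Rightarrow> nat \<Rightarrow> real" where
  "DpQ Q p i j = (p i / Q i i) * Q i j"

definition PG :: "nat \<Rightarrow> (nat \<Rightarrow> nat \<Rightarrow> real) \<Rightarrow> (nat \<Rightarrow> real) \<Rightarrow> real" where
  "PG d Q p = lambda_min d (DpQ Q p)"

definition pos_prob_vec :: "nat \<Rightarrow> (nat \<Rightarrow> real) \<Rightarrow> bool" where
  "pos_prob_vec d p \<longleftrightarrow> (\<forall>i\<in>{1..d}. p i > 0) \<and> (\<Sum>i=1..d. p i) = 1"

text \<open>The block-diagonal 2k x 2k matrix with 2x2 blocks [[1, rho_i],[rho_i, 1]];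
  coordinate i (1-based) belongs to block (i+1) div 2.\<close>
definition blockQ :: "(nat \<Rightarrow> real) \<Rightarrow> nat \<Rightarrow> nat \<Rightarrow> real" where
  "blockQ \<rho> i j =
     (if i = j then 1
      else if (i + 1) div 2 = (j + 1) div 2 then \<rho> ((i + 1) div 2)
      else 0)"

definition alpha :: "nat \<Rightarrow> (nat \<Rightarrow> real) \<Rightarrow> nat \<Rightarrow> real" where
  "alpha k \<rho> i =
     (\<Prod>l\<in>{1..k} - {i}. 1 - \<rho> l) / (\<Sum>l=1..k. \<Prod>j\<in>{1..k} - {l}. 1 - \<rho> j)"

end

theory Submission imports Defs begin

text \<open>\<open>D\<^sub>pQ\<close> is block diagonal, so its eigenvalues are those of its \<open>2 \<times> 2\<close> blocks. The smaller
  eigenvalue of the \<open>m\<close>-th block is at most \<open>s\<^sub>m (1 - \<rho>\<^sub>m) / 2\<close>, where \<open>s\<^sub>m = p\<^sub>2\<^sub>m\<^sub>-\<^sub>1 + p\<^sub>2\<^sub>m\<close>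
  is the mass of the block, with equality exactly when the block is split evenly. As the masses
  sum to 1, \<open>min\<^sub>m s\<^sub>m (1 - \<rho>\<^sub>m)\<close> is at most \<open>1 / \<Sum>\<^sub>l 1/(1 - \<rho>\<^sub>l)\<close>, with equality only for
  \<open>s\<^sub>m\<close> proportional to \<open>1/(1 - \<rho>\<^sub>m)\<close>, i.e. \<open>s\<^sub>m = \<alpha>\<^sub>m\<close>. Hence \<open>PG(p) \<le> 1 / (2 \<Sum>\<^sub>l 1/(1 - \<rho>\<^sub>l))\<close>,
  attained exactly at \<open>p\<^sub>2\<^sub>m\<^sub>-\<^sub>1 = p\<^sub>2\<^sub>m = \<alpha>\<^sub>m/2\<close>.\<close>

lemma pair_index_iff: "(m::nat) \<ge> 1 \<Longrightarrow> ((j + 1) div 2 = m) = (j = 2*m - 1 \<or> j = 2*m)"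
  by presburger

lemma pair_index_cases:
  fixes j k :: nat
  assumes "j \<in> {1..2*k}"
  obtains m where "m \<in> {1..k}" "j = 2*m - 1 \<or> j = 2*m"
proof -
  have "(j + 1) div 2 \<in> {1..k}" "j = 2*((j + 1) div 2) - 1 \<or> j = 2*((j + 1) div 2)"
    using assms by auto
  then show ?thesis using that by blast
qed

lemma sum_pairs: "(\<Sum>j=1..2*k. g j) = (\<Sum>m=1..k. g (2*m - 1) + g (2*m))"
  for g :: "nat \<Rightarrow> 'a::comm_monoid_add"
proof (induction k)
  case 0
  then show ?case by simp
next
  case (Suc k)
  have "{1..2 * Suc k} = insert (2*k + 2) (insert (2*k + 1) {1..2*k})" by auto
  then have "(\<Sum>j=1..2 * Suc k. g j) = (\<Sum>j=1..2*k. g j) + (g (2*k + 1) + g (2*k + 2))"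
    by (simp add: ac_simps)
  then show ?case using Suc by simp
qed

lemma pair_index_mem: "(m::nat) \<in> {1..k} \<Longrightarrow> 2*m - 1 \<in> {1..2*k} \<and> 2*m \<in> {1..2*k}"
  by auto

lemma pos_prob_vec_pair_sum:
  "pos_prob_vec (2*k) q \<Longrightarrow> (\<Sum>m=1..k. q (2*m - 1) + q (2*m)) = 1"
  using sum_pairs[of q k] unfolding pos_prob_vec_def by simp

subsection \<open>Eigenvalues of a \<open>2 \<times> 2\<close> block\<close>

text \<open>Characteristic polynomial and eigenvalues of \<open>[[a, a r], [b r, b]]\<close>, which is the \<open>m\<close>-th
  diagonal block of \<open>D\<^sub>pQ\<close> for \<open>a = p\<^sub>2\<^sub>m\<^sub>-\<^sub>1\<close>, \<open>b = p\<^sub>2\<^sub>m\<close>, \<open>r = \<rho>\<^sub>m\<close>.\<close>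

definition charpoly2 :: "real \<Rightarrow> real \<Rightarrow> real \<Rightarrow> real \<Rightarrow> real" where
  "charpoly2 a b r \<mu> = (a - \<mu>) * (b - \<mu>) - a * b * r\<^sup>2"

definition eig2_min :: "real \<Rightarrow> real \<Rightarrow> real \<Rightarrow> real" where
  "eig2_min a b r = ((a + b) - sqrt ((a - b)\<^sup>2 + 4*a*b*r\<^sup>2)) / 2"

definition eig2_max :: "real \<Rightarrow> real \<Rightarrow> real \<Rightarrow> real" where
  "eig2_max a b r = ((a + b) + sqrt ((a - b)\<^sup>2 + 4*a*b*r\<^sup>2)) / 2"

lemma charpoly2_discriminant_nonneg: "0 \<le> a * b \<Longrightarrow> 0 \<le> (a - b)\<^sup>2 + 4*a*b*(r::real)\<^sup>2"
  by (simp add: add_nonneg_nonneg)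

lemma charpoly2_root_cases:
  assumes "0 \<le> a * b" "charpoly2 a b r \<mu> = 0"
  shows "\<mu> = eig2_min a b r \<or> \<mu> = eig2_max a b r"
proof -
  define D where "D = (a - b)\<^sup>2 + 4*a*b*r\<^sup>2"
  have "(2*\<mu> - (a + b))\<^sup>2 = D"
    using assms(2) unfolding D_def charpoly2_def by (simp add: algebra_simps power2_eq_square)
  also have "D = (sqrt D)\<^sup>2"
    using charpoly2_discriminant_nonneg[OF assms(1)] unfolding D_def by simp
  finally have "2*\<mu> - (a + b) = sqrt D \<or> 2*\<mu> - (a + b) = - sqrt D"
    using power2_eq_iff by blast
  then show ?thesis unfolding eig2_min_def eig2_max_def D_def[symmetric] by auto
qed

lemma charpoly2_eig2_min: "0 \<le> a * b \<Longrightarrow> charpoly2 a b r (eig2_min a b r) = 0"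
  using charpoly2_discriminant_nonneg[of a b r]
  by (simp add: charpoly2_def eig2_min_def field_simps power2_eq_square)

lemma eig2_min_le_max: "0 \<le> a * b \<Longrightarrow> eig2_min a b r \<le> eig2_max a b r"
  unfolding eig2_min_def eig2_max_def by simp

lemma eig2_min_diag: "0 \<le> a \<Longrightarrow> 0 \<le> r \<Longrightarrow> eig2_min a a r = a * (1 - r)"
proof -
  assume "0 \<le> a" "0 \<le> r"
  then have "sqrt ((a - a)\<^sup>2 + 4*a*a*r\<^sup>2) = 2*a*r"
    by (simp add: real_sqrt_unique power2_eq_square)
  then show ?thesis unfolding eig2_min_def by (simp add: right_diff_distrib)
qed

lemma eig2_discriminant_ge_square:
  fixes a b r :: real
  assumes "\<bar>r\<bar> \<le> 1"
  shows "((a + b) * r)\<^sup>2 \<le> (a - b)\<^sup>2 + 4*a*b*r\<^sup>2"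
proof -
  have "((a + b) * r)\<^sup>2 = (a - b)\<^sup>2 * r\<^sup>2 + 4*a*b*r\<^sup>2"
    by (simp add: algebra_simps power2_eq_square)
  also have "(a - b)\<^sup>2 * r\<^sup>2 \<le> (a - b)\<^sup>2"
    using assms by (simp add: abs_square_le_1 mult_left_le)
  finally show ?thesis by simp
qed

lemma eig2_min_le_mean:
  assumes "\<bar>r\<bar> \<le> 1"
  shows "eig2_min a b r \<le> (a + b) * (1 - r) / 2"
proof -
  have "(a + b) * r \<le> sqrt ((a - b)\<^sup>2 + 4*a*b*r\<^sup>2)"
    using eig2_discriminant_ge_square[OF assms] real_le_rsqrt by blast
  then show ?thesis unfolding eig2_min_def by (simp add: right_diff_distrib divide_right_mono)
qed

lemma eig2_min_eq_mean_imp_eq: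
  assumes "\<bar>r\<bar> < 1" "eig2_min a b r = (a + b) * (1 - r) / 2"
  shows "a = b"
proof -
  define D where "D = (a - b)\<^sup>2 + 4*a*b*r\<^sup>2"
  have "sqrt D = (a + b) * r"
    using assms(2) unfolding eig2_min_def D_def[symmetric] by (simp add: right_diff_distrib)
  moreover have "0 \<le> D"
    using eig2_discriminant_ge_square[of r a b] assms(1) unfolding D_def by (smt (verit) zero_le_power2)
  ultimately have "D = ((a + b) * r)\<^sup>2" by (metis real_sqrt_pow2)
  then have "(a - b)\<^sup>2 * (1 - r\<^sup>2) = 0"
    unfolding D_def by (simp add: algebra_simps power2_eq_square)
  moreover have "r\<^sup>2 < 1" using assms(1) by (simp add: abs_square_less_1)
  ultimately show "a = b" by simp
qed

lemma block_eigenvector_exists: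
  assumes "a \<noteq> 0" "charpoly2 a b r \<mu> = 0"
  shows "\<exists>x y. (x \<noteq> 0 \<or> y \<noteq> 0) \<and> a * (x + r*y) = \<mu> * x \<and> b * (y + r*x) = \<mu> * y"
proof (cases "r = 0 \<and> \<mu> = a")
  case True
  then show ?thesis by (intro exI[of _ 1] exI[of _ 0]) simp
next
  case False
  then have "a*r \<noteq> 0 \<or> \<mu> - a \<noteq> 0" using assms(1) by auto
  moreover have "b * ((\<mu> - a) + r*(a*r)) = \<mu> * (\<mu> - a)"
    using assms(2) unfolding charpoly2_def by (simp add: algebra_simps power2_eq_square)
  ultimately show ?thesis
    by (intro exI[of _ "a*r"] exI[of _ "\<mu> - a"]) (simp add: algebra_simps)
qed

lemma block_eigenvalue_root:
  assumes "x \<noteq> 0 \<or> y \<noteq> 0" "a * (x + r*y) = \<mu> * x" "b * (y + r*x) = \<mu> * y"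
  shows "charpoly2 a b r \<mu> = 0"
proof -
  have "charpoly2 a b r \<mu> * x = (b - \<mu>) * ((a - \<mu>) * x) - a*r * (b*r*x)"
    unfolding charpoly2_def power2_eq_square by algebra
  also have "(a - \<mu>) * x = - a*r*y" using assms(2) by (simp add: algebra_simps)
  also have "b*r*x = \<mu>*y - b*y" using assms(3) by (simp add: algebra_simps)
  finally have "charpoly2 a b r \<mu> * x = 0" by (simp add: algebra_simps)
  have "charpoly2 a b r \<mu> * y = (a - \<mu>) * ((b - \<mu>) * y) - b*r * (a*r*y)"
    unfolding charpoly2_def power2_eq_square by algebra
  also have "(b - \<mu>) * y = - b*r*x" using assms(3) by (simp add: algebra_simps)
  also have "a*r*y = \<mu>*x - a*x" using assms(2) by (simp add: algebra_simps)
  finally have "charpoly2 a b r \<mu> * y = 0" by (simp add: algebra_simps)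
  with \<open>charpoly2 a b r \<mu> * x = 0\<close> show ?thesis using assms(1) by auto
qed

subsection \<open>The pseudo-spectral gap of the block matrix\<close>

lemma DpQ_blockQ_row_odd:
  assumes "m \<in> {1..k}"
  shows "(\<Sum>j=1..2*k. DpQ (blockQ \<rho>) p (2*m - 1) j * v j) = p (2*m - 1) * (v (2*m - 1) + \<rho> m * v (2*m))"
proof -
  have "DpQ (blockQ \<rho>) p (2*m - 1) j * v j =
      (if j = 2*m - 1 then p (2*m - 1) * v (2*m - 1) else 0)
    + (if j = 2*m then p (2*m - 1) * \<rho> m * v (2*m) else 0)" for j
    using assms pair_index_iff[of m j] by (auto simp: DpQ_def blockQ_def)
  with pair_index_mem[OF assms] show ?thesis by (simp add: sum.distrib algebra_simps)
qed

lemma DpQ_blockQ_row_even: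
  assumes "m \<in> {1..k}"
  shows "(\<Sum>j=1..2*k. DpQ (blockQ \<rho>) p (2*m) j * v j) = p (2*m) * (v (2*m) + \<rho> m * v (2*m - 1))"
proof -
  have "DpQ (blockQ \<rho>) p (2*m) j * v j =
      (if j = 2*m then p (2*m) * v (2*m) else 0)
    + (if j = 2*m - 1 then p (2*m) * \<rho> m * v (2*m - 1) else 0)" for j
    using assms pair_index_iff[of m j] by (auto simp: DpQ_def blockQ_def)
  with pair_index_mem[OF assms] show ?thesis by (simp add: sum.distrib algebra_simps)
qed

lemma DpQ_blockQ_eigenvalue_imp_block_root:
  assumes "mat_eigenvalue (2*k) (DpQ (blockQ \<rho>) p) \<mu>"
  shows "\<exists>m\<in>{1..k}. charpoly2 (p (2*m - 1)) (p (2*m)) (\<rho> m) \<mu> = 0"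
proof -
  obtain v j where j: "j \<in> {1..2*k}" "v j \<noteq> 0"
    and ev: "\<forall>i\<in>{1..2*k}. (\<Sum>j=1..2*k. DpQ (blockQ \<rho>) p i j * v j) = \<mu> * v i"
    using assms unfolding mat_eigenvalue_def by blast
  obtain m where m: "m \<in> {1..k}" "j = 2*m - 1 \<or> j = 2*m" using pair_index_cases[OF j(1)] .
  have "p (2*m - 1) * (v (2*m - 1) + \<rho> m * v (2*m)) = \<mu> * v (2*m - 1)"
    "p (2*m) * (v (2*m) + \<rho> m * v (2*m - 1)) = \<mu> * v (2*m)"
    using ev pair_index_mem[OF m(1)] DpQ_blockQ_row_odd[OF m(1), of \<rho> p v]
      DpQ_blockQ_row_even[OF m(1), of \<rho> p v]
    by simp_all
  moreover have "v (2*m - 1) \<noteq> 0 \<or> v (2*m) \<noteq> 0" using m(2) j(2) by auto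
  ultimately show ?thesis using block_eigenvalue_root m(1) by blast
qed

lemma block_root_imp_DpQ_blockQ_eigenvalue:
  assumes m: "m \<in> {1..k}" and "p (2*m - 1) \<noteq> 0"
    and "charpoly2 (p (2*m - 1)) (p (2*m)) (\<rho> m) \<mu> = 0"
  shows "mat_eigenvalue (2*k) (DpQ (blockQ \<rho>) p) \<mu>"
proof -
  obtain x y where xy: "x \<noteq> 0 \<or> y \<noteq> 0" "p (2*m - 1) * (x + \<rho> m * y) = \<mu> * x"
    "p (2*m) * (y + \<rho> m * x) = \<mu> * y"
    using block_eigenvector_exists[OF assms(2,3)] by blast
  define v where "v i = (if i = 2*m - 1 then x else if i = 2*m then y else 0)" for i
  have vm: "v (2*m - 1) = x" "v (2*m) = y" using m unfolding v_def by auto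
  have nonzero: "\<exists>j\<in>{1..2*k}. v j \<noteq> 0"
    using xy(1) vm pair_index_mem[OF m] by auto
  have "(\<Sum>j=1..2*k. DpQ (blockQ \<rho>) p i j * v j) = \<mu> * v i" if i: "i \<in> {1..2*k}" for i
  proof -
    obtain m' where m': "m' \<in> {1..k}" "i = 2*m' - 1 \<or> i = 2*m'" using pair_index_cases[OF i] .
    show ?thesis
    proof (cases "m' = m")
      case True
      then show ?thesis
        using m' DpQ_blockQ_row_odd[OF m] DpQ_blockQ_row_even[OF m] xy vm by auto
    next
      case False
      then have "v (2*m' - 1) = 0" "v (2*m') = 0" using m' m unfolding v_def by auto
      then show ?thesis using m' DpQ_blockQ_row_odd[OF m'(1)] DpQ_blockQ_row_even[OF m'(1)] by auto
    qed
  qed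
  then show ?thesis unfolding mat_eigenvalue_def using nonzero by blast
qed

lemma PG_blockQ_eq_Min_eig2_min:
  assumes pos: "\<forall>i\<in>{1..2*k}. p i > 0" and k: "k \<ge> 1"
  shows "PG (2*k) (blockQ \<rho>) p = Min ((\<lambda>m. eig2_min (p (2*m - 1)) (p (2*m)) (\<rho> m)) ` {1..k})"
proof -
  define S where "S = {\<mu>. mat_eigenvalue (2*k) (DpQ (blockQ \<rho>) p) \<mu>}"
  define L where "L m = eig2_min (p (2*m - 1)) (p (2*m)) (\<rho> m)" for m
  define H where "H m = eig2_max (p (2*m - 1)) (p (2*m)) (\<rho> m)" for m
  have pos_pair: "p (2*m - 1) > 0" "p (2*m) > 0" if "m \<in> {1..k}" for m
    using pair_index_mem[OF that] pos by blast+
  then have ab: "0 \<le> p (2*m - 1) * p (2*m)" if "m \<in> {1..k}" for m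
    using that by (simp add: less_imp_le)
  have LS: "L ` {1..k} \<subseteq> S"
  proof
    fix \<mu> assume "\<mu> \<in> L ` {1..k}"
    then obtain m where m: "m \<in> {1..k}" "\<mu> = L m" by blast
    have "charpoly2 (p (2*m - 1)) (p (2*m)) (\<rho> m) \<mu> = 0"
      unfolding m(2) L_def by (rule charpoly2_eig2_min[OF ab[OF m(1)]])
    then show "\<mu> \<in> S"
      unfolding S_def using block_root_imp_DpQ_blockQ_eigenvalue[OF m(1)] pos_pair(1)[OF m(1)] by simp
  qed
  have SU: "S \<subseteq> (\<Union>m\<in>{1..k}. {L m, H m})"
  proof
    fix \<mu> assume "\<mu> \<in> S"
    then obtain m where m: "m \<in> {1..k}" "charpoly2 (p (2*m - 1)) (p (2*m)) (\<rho> m) \<mu> = 0"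
      unfolding S_def using DpQ_blockQ_eigenvalue_imp_block_root by blast
    then show "\<mu> \<in> (\<Union>m\<in>{1..k}. {L m, H m})"
      using charpoly2_root_cases[OF ab[OF m(1)] m(2)] unfolding L_def H_def by blast
  qed
  have fin: "finite S" using SU by (rule finite_subset) auto
  have ne: "L ` {1..k} \<noteq> {}" using k by auto
  have "Min (L ` {1..k}) \<le> \<mu>" if "\<mu> \<in> S" for \<mu>
  proof -
    obtain m where m: "m \<in> {1..k}" "\<mu> = L m \<or> \<mu> = H m" using SU \<open>\<mu> \<in> S\<close> by blast
    then have "L m \<le> \<mu>" using eig2_min_le_max[OF ab[OF m(1)]] unfolding L_def H_def by auto
    moreover have "Min (L ` {1..k}) \<le> L m" using m(1) by simp
    ultimately show ?thesis by linarith
  qed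
  moreover have "S \<noteq> {}" using LS ne by blast
  ultimately have "Min (L ` {1..k}) \<le> Min S" using fin by simp
  then have "Min S = Min (L ` {1..k})" using Min_antimono[OF LS ne fin] by simp
  then show ?thesis unfolding PG_def lambda_min_def S_def L_def by simp
qed

lemma PG_blockQ_le_eig2_min:
  assumes "pos_prob_vec (2*k) q" "m \<in> {1..k}"
  shows "PG (2*k) (blockQ \<rho>) q \<le> eig2_min (q (2*m - 1)) (q (2*m)) (\<rho> m)"
  using PG_blockQ_eq_Min_eig2_min[of k q \<rho>] assms unfolding pos_prob_vec_def by auto

lemma PG_blockQ_le_pair_mass:
  assumes q: "pos_prob_vec (2*k) q" and m: "m \<in> {1..k}" and r: "\<bar>\<rho> m\<bar> \<le> 1"
  shows "2 * PG (2*k) (blockQ \<rho>) q \<le> (q (2*m - 1) + q (2*m)) * (1 - \<rho> m)"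
  using PG_blockQ_le_eig2_min[OF q m, of \<rho>] eig2_min_le_mean[OF r, of "q (2*m - 1)" "q (2*m)"]
  by linarith

lemma PG_blockQ_eq_pair_mass_imp_even_split:
  assumes q: "pos_prob_vec (2*k) q" and m: "m \<in> {1..k}" and r: "\<bar>\<rho> m\<bar> < 1"
    and eq: "2 * PG (2*k) (blockQ \<rho>) q = (q (2*m - 1) + q (2*m)) * (1 - \<rho> m)"
  shows "q (2*m - 1) = q (2*m)"
proof (rule eig2_min_eq_mean_imp_eq[OF r])
  show "eig2_min (q (2*m - 1)) (q (2*m)) (\<rho> m) = (q (2*m - 1) + q (2*m)) * (1 - \<rho> m) / 2"
    using PG_blockQ_le_eig2_min[OF q m, of \<rho>] eig2_min_le_mean[of "\<rho> m" "q (2*m - 1)" "q (2*m)"] r eq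
    by linarith
qed

subsection \<open>Maximising the smallest weighted share\<close>

lemma min_weighted_share_le:
  fixes s c :: "'a \<Rightarrow> real"
  assumes "finite I" "\<forall>m\<in>I. c m > 0" "sum s I = 1" "\<forall>m\<in>I. t \<le> s m * c m"
  shows "t * (\<Sum>m\<in>I. 1 / c m) \<le> 1"
proof -
  have "(\<Sum>m\<in>I. t * (1 / c m)) \<le> sum s I"
    using assms by (intro sum_mono) (simp add: field_simps)
  then show ?thesis using assms(3) by (simp add: sum_distrib_left)
qed

lemma min_weighted_share_eq:
  fixes s c :: "'a \<Rightarrow> real"
  assumes "finite I" "\<forall>m\<in>I. c m > 0" "sum s I = 1" "\<forall>m\<in>I. t \<le> s m * c m"
    and "t * (\<Sum>m\<in>I. 1 / c m) = 1" and "m \<in> I"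
  shows "s m = t / c m"
proof -
  have ge: "t / c m \<le> s m" if "m \<in> I" for m
    using assms(2,4) that by (simp add: field_simps)
  have "(\<Sum>m\<in>I. s m - t / c m) = 0"
    using assms(3,5) by (simp add: sum_subtractf sum_distrib_left)
  then show ?thesis using ge assms(1,6) by (subst (asm) sum_nonneg_eq_0_iff) auto
qed

definition gap_bound :: "nat \<Rightarrow> (nat \<Rightarrow> real) \<Rightarrow> real" where
  "gap_bound k \<rho> = 1 / (2 * (\<Sum>l=1..k. 1 / (1 - \<rho> l)))"

lemma sum_prod_remove:
  fixes f :: "'a \<Rightarrow> 'b::field"
  assumes "finite I" "\<forall>l\<in>I. f l \<noteq> 0"
  shows "(\<Sum>l\<in>I. \<Prod>j\<in>I - {l}. f j) = prod f I * (\<Sum>l\<in>I. 1 / f l)"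
  unfolding sum_distrib_left using assms by (intro sum.cong) (simp_all add: prod_diff1)

lemma alpha_eq_inverse_share:
  assumes "\<forall>l\<in>{1..k}. \<rho> l < 1" "i \<in> {1..k}"
  shows "alpha k \<rho> i = (1 / (1 - \<rho> i)) / (\<Sum>l=1..k. 1 / (1 - \<rho> l))"
proof -
  have nz: "\<forall>l\<in>{1..k}. 1 - \<rho> l \<noteq> 0" using assms(1) by fastforce
  then have "(\<Prod>l=1..k. 1 - \<rho> l) \<noteq> 0" by simp
  then show ?thesis
    unfolding alpha_def sum_prod_remove[OF finite_atLeastAtMost nz]
    using assms(2) by (simp add: prod_diff1)
qed

lemma gap_bound_closed_form:
  assumes "\<forall>l\<in>{1..k}. \<rho> l < 1"
  shows "gap_bound k \<rho> = (\<Prod>l=1..k. 1 - \<rho> l) / (2 * (\<Sum>l=1..k. \<Prod>j\<in>{1..k} - {l}. 1 - \<rho> j))"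
proof -
  have nz: "\<forall>l\<in>{1..k}. 1 - \<rho> l \<noteq> 0" using assms by fastforce
  then have "(\<Prod>l=1..k. 1 - \<rho> l) \<noteq> 0" by simp
  then show ?thesis unfolding gap_bound_def sum_prod_remove[OF finite_atLeastAtMost nz] by simp
qed

lemma sum_inverse_one_minus_pos:
  fixes \<rho> :: "nat \<Rightarrow> real"
  assumes "k \<ge> 1" "\<forall>i\<in>{1..k}. 0 \<le> \<rho> i \<and> \<rho> i < 1"
  shows "(\<Sum>l=1..k. 1 / (1 - \<rho> l)) > 0"
  using assms by (intro sum_pos) auto

lemma alpha_pos_sum:
  assumes k: "k \<ge> 1" and rho: "\<forall>i\<in>{1..k}. 0 \<le> \<rho> i \<and> \<rho> i < 1"
  shows "\<forall>i\<in>{1..k}. alpha k \<rho> i > 0" "(\<Sum>i=1..k. alpha k \<rho> i) = 1"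
proof -
  define W where "W = (\<Sum>l=1..k. 1 / (1 - \<rho> l))"
  have "W > 0" unfolding W_def using sum_inverse_one_minus_pos[OF k rho] .
  moreover have alpha: "alpha k \<rho> i = (1 / (1 - \<rho> i)) / W" if "i \<in> {1..k}" for i
    using alpha_eq_inverse_share[of k \<rho> i] rho that unfolding W_def by auto
  ultimately show "\<forall>i\<in>{1..k}. alpha k \<rho> i > 0" using rho by auto
  have "(\<Sum>i=1..k. alpha k \<rho> i) = (\<Sum>i=1..k. 1 / (1 - \<rho> i)) / W"
    unfolding sum_divide_distrib using alpha by (intro sum.cong) auto
  then show "(\<Sum>i=1..k. alpha k \<rho> i) = 1" using \<open>W > 0\<close> unfolding W_def by simp
qed

lemma PG_blockQ_le_gap_bound:
  assumes k: "k \<ge> 1" and rho: "\<forall>i\<in>{1..k}. 0 \<le> \<rho> i \<and> \<rho> i < 1" and q: "pos_prob_vec (2*k) q"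
  shows "PG (2*k) (blockQ \<rho>) q \<le> gap_bound k \<rho>"
proof -
  define W where "W = (\<Sum>l=1..k. 1 / (1 - \<rho> l))"
  have "W > 0" unfolding W_def using sum_inverse_one_minus_pos[OF k rho] .
  have "2 * PG (2*k) (blockQ \<rho>) q * W \<le> 1"
    unfolding W_def
  proof (rule min_weighted_share_le)
    show "\<forall>m\<in>{1..k}. 2 * PG (2*k) (blockQ \<rho>) q \<le> (q (2*m - 1) + q (2*m)) * (1 - \<rho> m)"
      using PG_blockQ_le_pair_mass[OF q] rho by force
  qed (use pos_prob_vec_pair_sum[OF q] rho in auto)
  then show ?thesis unfolding gap_bound_def W_def[symmetric] using \<open>W > 0\<close> by (simp add: field_simps)
qed

lemma PG_blockQ_balanced:
  assumes k: "k \<ge> 1" and rho: "\<forall>i\<in>{1..k}. 0 \<le> \<rho> i \<and> \<rho> i < 1"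
  defines "p \<equiv> \<lambda>j. alpha k \<rho> ((j + 1) div 2) / 2"
  shows "pos_prob_vec (2*k) p" "PG (2*k) (blockQ \<rho>) p = gap_bound k \<rho>"
proof -
  have p_pair: "p (2*m - 1) = alpha k \<rho> m / 2" "p (2*m) = alpha k \<rho> m / 2" if "m \<in> {1..k}" for m
    unfolding p_def using that by (simp_all add: pair_index_iff)
  have "(\<Sum>m=1..k. p (2*m - 1) + p (2*m)) = (\<Sum>m=1..k. alpha k \<rho> m)"
  proof (rule sum.cong)
    show "p (2*m - 1) + p (2*m) = alpha k \<rho> m" if "m \<in> {1..k}" for m
      using p_pair[OF that] by simp
  qed simp
  then have "(\<Sum>j=1..2*k. p j) = 1" unfolding sum_pairs using alpha_pos_sum(2)[OF k rho] by simp
  moreover have "p j > 0" if "j \<in> {1..2*k}" for j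
    using pair_index_cases[OF that] p_pair alpha_pos_sum(1)[OF k rho] by (metis half_gt_zero)
  ultimately show p: "pos_prob_vec (2*k) p" unfolding pos_prob_vec_def by blast
  have "eig2_min (p (2*m - 1)) (p (2*m)) (\<rho> m) = gap_bound k \<rho>" if m: "m \<in> {1..k}" for m
  proof -
    have "alpha k \<rho> m > 0" "\<rho> m \<ge> 0" using alpha_pos_sum(1)[OF k rho] rho m by auto
    then have "eig2_min (p (2*m - 1)) (p (2*m)) (\<rho> m) = alpha k \<rho> m / 2 * (1 - \<rho> m)"
      unfolding p_pair[OF m] by (intro eig2_min_diag) auto
    also have "\<dots> = gap_bound k \<rho>"
    proof -
      have "alpha k \<rho> m = 1 / (1 - \<rho> m) / (\<Sum>l=1..k. 1 / (1 - \<rho> l))"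
        using alpha_eq_inverse_share[of k \<rho> m] rho m by auto
      moreover have "1 - \<rho> m \<noteq> 0" using bspec[OF rho m] by simp
      ultimately show ?thesis unfolding gap_bound_def by simp
    qed
    finally show ?thesis .
  qed
  then have "(\<lambda>m. eig2_min (p (2*m - 1)) (p (2*m)) (\<rho> m)) ` {1..k} = (\<lambda>m. gap_bound k \<rho>) ` {1..k}"
    by (rule image_cong[OF refl])
  also have "\<dots> = {gap_bound k \<rho>}" using k by auto
  finally show "PG (2*k) (blockQ \<rho>) p = gap_bound k \<rho>"
    using PG_blockQ_eq_Min_eig2_min[of k p \<rho>] p k unfolding pos_prob_vec_def by simp
qed

lemma PG_blockQ_ge_gap_bound_imp_balanced:
  assumes k: "k \<ge> 1" and rho: "\<forall>i\<in>{1..k}. 0 \<le> \<rho> i \<and> \<rho> i < 1" and q: "pos_prob_vec (2*k) q"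
    and opt: "PG (2*k) (blockQ \<rho>) q \<ge> gap_bound k \<rho>"
    and m: "m \<in> {1..k}"
  shows "q (2*m - 1) = alpha k \<rho> m / 2 \<and> q (2*m) = alpha k \<rho> m / 2"
proof -
  define W where "W = (\<Sum>l=1..k. 1 / (1 - \<rho> l))"
  have "W > 0" unfolding W_def using sum_inverse_one_minus_pos[OF k rho] .
  have PG_eq: "PG (2*k) (blockQ \<rho>) q = 1 / (2 * W)"
    using PG_blockQ_le_gap_bound[OF k rho q] opt unfolding gap_bound_def W_def by simp
  then have PG_W: "2 * PG (2*k) (blockQ \<rho>) q * W = 1" using \<open>W > 0\<close> by simp
  have bound: "\<forall>m\<in>{1..k}. 2 * PG (2*k) (blockQ \<rho>) q \<le> (q (2*m - 1) + q (2*m)) * (1 - \<rho> m)"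
    using PG_blockQ_le_pair_mass[OF q] rho by force
  have mass: "q (2*m - 1) + q (2*m) = 2 * PG (2*k) (blockQ \<rho>) q / (1 - \<rho> m)"
    by (rule min_weighted_share_eq[OF _ _ pos_prob_vec_pair_sum[OF q] bound PG_W[unfolded W_def] m])
      (use rho in auto)
  also have "\<dots> = alpha k \<rho> m"
    using alpha_eq_inverse_share[of k \<rho> m] rho m unfolding PG_eq W_def[symmetric]
    by (auto simp: ac_simps)
  finally have "q (2*m - 1) + q (2*m) = alpha k \<rho> m" .
  moreover have "q (2*m - 1) = q (2*m)"
  proof (rule PG_blockQ_eq_pair_mass_imp_even_split[OF q m])
    show "\<bar>\<rho> m\<bar> < 1" using bspec[OF rho m] by auto
    show "2 * PG (2*k) (blockQ \<rho>) q = (q (2*m - 1) + q (2*m)) * (1 - \<rho> m)"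
      unfolding mass using bspec[OF rho m] by auto
  qed
  ultimately show ?thesis by simp
qed

theorem proposition1:
  fixes k :: nat and \<rho> :: "nat \<Rightarrow> real"
  assumes k: "k \<ge> 1"
    and rho: "\<forall>i\<in>{1..k}. 0 \<le> \<rho> i \<and> \<rho> i < 1"
  shows "(\<exists>p. pos_prob_vec (2 * k) p \<and>
            (\<forall>q. pos_prob_vec (2 * k) q \<longrightarrow> PG (2 * k) (blockQ \<rho>) q \<le> PG (2 * k) (blockQ \<rho>) p))
     \<and> (\<forall>popt. pos_prob_vec (2 * k) popt \<and>
            (\<forall>q. pos_prob_vec (2 * k) q \<longrightarrow> PG (2 * k) (blockQ \<rho>) q \<le> PG (2 * k) (blockQ \<rho>) popt)
          \<longrightarrow> (\<forall>i\<in>{1..k}. popt (2 * i - 1) = alpha k \<rho> i / 2 \<and> popt (2 * i) = alpha k \<rho> i / 2)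
            \<and> PG (2 * k) (blockQ \<rho>) popt =
                (\<Prod>l=1..k. 1 - \<rho> l) / (2 * (\<Sum>l=1..k. \<Prod>j\<in>{1..k} - {l}. 1 - \<rho> j)))"
proof -
  define p where "p = (\<lambda>j. alpha k \<rho> ((j + 1) div 2) / 2)"
  have p: "pos_prob_vec (2*k) p" "PG (2*k) (blockQ \<rho>) p = gap_bound k \<rho>"
    using PG_blockQ_balanced[OF k rho] unfolding p_def by auto
  note le = PG_blockQ_le_gap_bound[OF k rho]
  show ?thesis
  proof (intro conjI allI impI)
    show "\<exists>p. pos_prob_vec (2*k) p \<and>
        (\<forall>q. pos_prob_vec (2*k) q \<longrightarrow> PG (2*k) (blockQ \<rho>) q \<le> PG (2*k) (blockQ \<rho>) p)"
      using p le by metis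
  next
    fix popt
    assume "pos_prob_vec (2*k) popt \<and>
      (\<forall>q. pos_prob_vec (2*k) q \<longrightarrow> PG (2*k) (blockQ \<rho>) q \<le> PG (2*k) (blockQ \<rho>) popt)"
    then have popt: "pos_prob_vec (2*k) popt" "PG (2*k) (blockQ \<rho>) popt = gap_bound k \<rho>"
      using p le[of popt] by force+
    then show "\<forall>i\<in>{1..k}. popt (2*i - 1) = alpha k \<rho> i / 2 \<and> popt (2*i) = alpha k \<rho> i / 2"
      using PG_blockQ_ge_gap_bound_imp_balanced[OF k rho] by simp
    show "PG (2*k) (blockQ \<rho>) popt =
        (\<Prod>l=1..k. 1 - \<rho> l) / (2 * (\<Sum>l=1..k. \<Prod>j\<in>{1..k} - {l}. 1 - \<rho> j))"
      using popt(2) gap_bound_closed_form rho by simp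
  qed
qed

end
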